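(* Let $k\ge 1$, let $\mu_{\text{ns}}\in\mathbb{R}^{d_{\text{ns}}}$, $\Sigma_{\text{ns}}\in\mathbb{S}^{d_{\text{ns}}}_{++}$, and for each $i\in[k]$ let $\mu_i\in\mathbb{R}^{d_{\text{sp}}}$, $\Sigma_i\in\mathbb{S}^{d_{\text{sp}}}_{++}$. In environment $e_i$, data is generated as follows: $y=1$ with probability $\eta$ and $y=-1$ otherwise; conditionally on $Y=y$, ${\mathbf x}_{\text{ns}}\sim\mathcal{N}(y\mu_{\text{ns}},\Sigma_{\text{ns}})$ and ${\mathbf x}_{\text{sp}}\sim\mathcal{N}(y\mu_i,\Sigma_i)$, drawn independently; and ${\mathbf x}=[{\mathbf x}_{\text{ns}},{\mathbf x}_{\text{sp}}]$. Let $\sigma:\mathbb{R}\to(0,1)$ be an invertible function and consider the classifier $f({\mathbf x};{\mathbf w},b)=\sigma({\mathbf w}^\top{\mathbf x}-b)$ with ${\mathbf w}=[{\mathbf w}_{\text{ns}},{\mathbf w}_{\text{sp}}]$ decomposed into coefficients of the invariant and spurious features. If $f$ is calibrated on all $k$ environments, then either ${\mathbf w}=\mathbf{0}$ or there exists $t\neq 0$ such that $$\frac{{\mathbf w}_{\text{ns}}^\top\mu_{\text{ns}}+{\mathbf w}_{\text{sp}}^\top\mu_i}{{\mathbf w}_{\text{ns}}^\top\Sigma_{\text{ns}}{\mathbf w}_{\text{ns}}+{\mathbf w}_{\text{sp}}^\top\Sigma_i{\mathbf w}_{\text{sp}}}=t\quad\text{for all } i\in[k].$$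
   Context: $\mathbb{S}^d_{++}$ denotes the set of $d\times d$ symmetric positive definite matrices, and $[k]=\{1,\dots,k\}$. A classifier $f$ with values in $(0,1)$ is calibrated on the environments $e_1,\dots,e_k$ if for each $i\in[k]$ and every $\alpha$ in the range of $f$ restricted to $e_i$, $P[Y=1\mid f(X)=\alpha, E=e_i]=\alpha$. *)

theory Defs
  imports "HOL-Probability.Probability"
begin

definition sym_pos_def :: "real^'n^'n \<Rightarrow> bool" where
  "sym_pos_def A \<longleftrightarrow> transpose A = A \<and> (\<forall>x. x \<noteq> 0 \<longrightarrow> x \<bullet> (A *v x) > 0)"

definition gauss_density :: "real^'n \<Rightarrow> real^'n^'n \<Rightarrow> real^'n \<Rightarrow> real" where
  "gauss_density mu Sig x =
     exp (- ((x - mu) \<bullet> (matrix_inv Sig *v (x - mu))) / 2)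
       / sqrt ((2 * pi) ^ CARD('n) * det Sig)"

definition env_measure ::
  "real \<Rightarrow> (real^'a) \<Rightarrow> (real^'a^'a) \<Rightarrow> (real^'b) \<Rightarrow> (real^'b^'b)
     \<Rightarrow> (real \<times> ((real^'a) \<times> (real^'b))) measure" where
  "env_measure eta mu_ns Sig_ns mu_sp Sig_sp =
     density (count_space {-1, 1} \<Otimes>\<^sub>M (lborel \<Otimes>\<^sub>M lborel))
       (\<lambda>(y, (xns, xsp)). ennreal ((if y = 1 then eta else 1 - eta)
            * gauss_density (y *\<^sub>R mu_ns) Sig_ns xns
            * gauss_density (y *\<^sub>R mu_sp) Sig_sp xsp))"

text \<open>A score function f (values in (0,1)) is calibrated w.r.t. the data law M if
  P[Y = 1 | f] = f almost surely, i.e. the conditional expectation of the indicator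
  of Y = 1 given the sigma-algebra generated by f equals f a.s.\<close>
definition calibrated :: "'x measure \<Rightarrow> ('x \<Rightarrow> real) \<Rightarrow> ('x \<Rightarrow> real) \<Rightarrow> bool" where
  "calibrated M Y f \<longleftrightarrow>
     (AE z in M. real_cond_exp M (vimage_algebra (space M) f borel) Y z = f z)"

end

theory Submission
  imports Defs
begin

text \<open>
  Write w = (w_ns, w_sp) and let t_i be the ratio in the theorem. Completing the square shows
  that in environment i the density of x given Y = 1 is the density given Y = -1, shifted
  orthogonally to w and tilted by exp (2 t_i (w . x)). The score is g (w . x) with g injective;
  by Lusin's theorem an injective Borel map generates, up to null sets, the full Borel
  sigma-algebra, so calibration becomes the pointwise identity
  eta exp (2 t_i u) (1 - g u) = (1 - eta) g u for almost every value u of w . x.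
  Comparing two environments at a common u \<noteq> 0 gives t_i = t_1, and t_1 = 0 would force
  g to be constant almost everywhere, contradicting injectivity.
\<close>

section \<open>Positive definite matrices\<close>

lemma sym_pos_def_inner_commute:
  assumes "sym_pos_def S"
  shows "(S *v x) \<bullet> y = x \<bullet> (S *v y)"
proof -
  have "(S *v x) \<bullet> y = (x v* transpose S) \<bullet> y" by simp
  also have "\<dots> = x \<bullet> (transpose S *v y)" by (rule dot_lmul_matrix)
  also have "transpose S = S" using assms by (simp add: sym_pos_def_def)
  finally show ?thesis .
qed

lemma sym_pos_def_quadratic_nonneg:
  assumes "sym_pos_def S"
  shows "x \<bullet> (S *v x) \<ge> 0"
  using assms unfolding sym_pos_def_def by (cases "x = 0") (auto intro: less_imp_le)

lemma sym_pos_def_invertible: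
  assumes "sym_pos_def S"
  shows "invertible S"
proof -
  have "x = 0" if "S *v x = 0" for x
    using assms that unfolding sym_pos_def_def by force
  then obtain B where "B ** S = mat 1" using matrix_left_invertible_ker by blast
  then show ?thesis using invertible_left_inverse by blast
qed

lemma sym_pos_def_matrix_inv:
  assumes "sym_pos_def S"
  shows "S *v (matrix_inv S *v y) = y" "matrix_inv S *v (S *v y) = y"
proof -
  have "S ** matrix_inv S = mat 1 \<and> matrix_inv S ** S = mat 1"
    using sym_pos_def_invertible[OF assms] unfolding invertible_def matrix_inv_def
    by (rule someI_ex)
  then show "S *v (matrix_inv S *v y) = y" "matrix_inv S *v (S *v y) = y"
    by (simp_all add: matrix_vector_mul_assoc)
qed

lemma sym_pos_def_det_pos:
  fixes S :: "real^'n^'n"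
  assumes "sym_pos_def S"
  shows "det S > 0"
proof (rule ccontr)
  assume "\<not> det S > 0"
  define A where "A s = (1 - s) *\<^sub>R mat 1 + s *\<^sub>R S" for s :: real
  have "continuous_on UNIV (\<lambda>s. det (A s))"
    unfolding A_def det_def by (intro continuous_intros)
  then obtain s where s: "0 \<le> s" "s \<le> 1" "det (A s) = 0"
    using IVT2[of "\<lambda>s. det (A s)" 1 0 0] \<open>\<not> det S > 0\<close>
    by (auto simp: A_def continuous_on_eq_continuous_at)
  have "sym_pos_def (A s)"
    unfolding sym_pos_def_def
  proof (intro conjI allI impI)
    show "transpose (A s) = A s"
      using assms by (simp add: A_def sym_pos_def_def transpose_def vec_eq_iff mat_def)
    fix x :: "real^'n" assume "x \<noteq> 0"
    have "x \<bullet> (A s *v x) = (1 - s) * (x \<bullet> x) + s * (x \<bullet> (S *v x))"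
      by (simp add: A_def matrix_vector_mult_add_rdistrib
          scaleR_matrix_vector_assoc[symmetric] inner_add_right)
    moreover have "x \<bullet> x > 0" "x \<bullet> (S *v x) > 0"
      using assms \<open>x \<noteq> 0\<close> by (auto simp: sym_pos_def_def)
    ultimately show "x \<bullet> (A s *v x) > 0"
      using s by (cases "s = 0") (auto intro: add_nonneg_pos)
  qed
  then show False
    using s(3) sym_pos_def_invertible invertible_det_nz by blast
qed

lemma sym_pos_def_matrix_inv_quadratic_pos:
  assumes "sym_pos_def S" "y \<noteq> 0"
  shows "y \<bullet> (matrix_inv S *v y) > 0"
proof -
  define z where "z = matrix_inv S *v y"
  have y: "y = S *v z" using sym_pos_def_matrix_inv(1)[OF assms(1)] by (simp add: z_def)
  then have "z \<noteq> 0" using assms(2) by auto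
  with assms(1) have "z \<bullet> (S *v z) > 0" unfolding sym_pos_def_def by blast
  then show ?thesis unfolding z_def[symmetric] using y by (simp add: inner_commute)
qed

lemma sym_pos_def_matrix_inv_coercive:
  fixes S :: "real^'n^'n"
  assumes "sym_pos_def S"
  obtains c where "c > 0" "\<And>y. c * (norm y)\<^sup>2 \<le> y \<bullet> (matrix_inv S *v y)"
proof -
  let ?q = "\<lambda>y::real^'n. y \<bullet> (matrix_inv S *v y)"
  have "sphere (0::real^'n) 1 \<noteq> {}" by simp
  moreover have "continuous_on (sphere 0 1) ?q" by (intro continuous_intros)
  ultimately obtain y0 where y0: "y0 \<in> sphere 0 1" "\<And>y. y \<in> sphere 0 1 \<Longrightarrow> ?q y0 \<le> ?q y"
    using continuous_attains_inf[OF compact_sphere] by blast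
  have "?q y0 * (norm y)\<^sup>2 \<le> ?q y" for y
  proof (cases "y = 0")
    case False
    define u where "u = (1 / norm y) *\<^sub>R y"
    have yu: "y = norm y *\<^sub>R u" using False by (simp add: u_def)
    have "?q y = (norm y)\<^sup>2 * ?q u"
      by (subst yu, subst yu) (simp add: matrix_vector_mult_scaleR power2_eq_square)
    moreover have "?q y0 \<le> ?q u"
      using y0(2) False by (simp add: u_def del: inner_scaleR_left inner_scaleR_right)
    ultimately show ?thesis by (metis mult.commute mult_right_mono zero_le_power2)
  qed simp
  moreover have "y0 \<noteq> 0" using y0(1) by auto
  then have "?q y0 > 0" by (rule sym_pos_def_matrix_inv_quadratic_pos[OF assms])
  ultimately show ?thesis using that by blast
qed

lemma sym_pos_def_block_quadratic_pos:
  fixes wns :: "real^'a" and wsp :: "real^'b"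
  assumes "sym_pos_def Sns" "sym_pos_def Ssp" "\<not> (wns = 0 \<and> wsp = 0)"
  shows "wns \<bullet> (Sns *v wns) + wsp \<bullet> (Ssp *v wsp) > 0"
proof -
  have "wns \<bullet> (Sns *v wns) \<ge> 0" "wsp \<bullet> (Ssp *v wsp) \<ge> 0"
    using sym_pos_def_quadratic_nonneg assms(1,2) by auto
  moreover have "wns \<bullet> (Sns *v wns) > 0 \<or> wsp \<bullet> (Ssp *v wsp) > 0"
    using assms unfolding sym_pos_def_def by blast
  ultimately show ?thesis by linarith
qed

section \<open>Gaussian densities\<close>

lemma gauss_density_pos:
  fixes S :: "real^'n^'n"
  assumes "sym_pos_def S"
  shows "gauss_density mu S x > 0"
  using sym_pos_def_det_pos[OF assms] unfolding gauss_density_def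
  by (intro divide_pos_pos) auto

lemma continuous_on_gauss_density: "continuous_on UNIV (gauss_density mu S)"
proof -
  have "continuous_on UNIV (\<lambda>x. matrix_inv S *v (x - mu))"
    by (rule continuous_on_compose2[OF matrix_vector_mult_linear_continuous_on])
      (auto intro!: continuous_intros)
  then show ?thesis
    unfolding gauss_density_def divide_inverse by (intro continuous_intros)
qed

lemma borel_measurable_gauss_density[measurable]: "gauss_density mu S \<in> borel_measurable borel"
  by (rule borel_measurable_continuous_onI[OF continuous_on_gauss_density])

lemma nn_integral_exp_neg_square_finite:
  fixes c :: real
  assumes "c > 0"
  shows "(\<integral>\<^sup>+t. ennreal (exp (- c * t\<^sup>2)) \<partial>lborel) < \<infinity>"
proof -
  define s where "s = sqrt (1 / (2 * c))"
  have s: "s > 0" "2 * s\<^sup>2 = 1 / c" using assms by (simp_all add: s_def)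
  have "exp (- c * t\<^sup>2) = sqrt (2 * pi * s\<^sup>2) * normal_density 0 s t" for t
    using s assms by (simp add: normal_density_def field_simps)
  moreover have "(\<integral>\<^sup>+t. ennreal (normal_density 0 s t) \<partial>lborel) = 1"
    using nn_integral_eq_integral[OF integrable_normal_density[OF s(1)]] s(1) by simp
  ultimately have "(\<integral>\<^sup>+t. ennreal (exp (- c * t\<^sup>2)) \<partial>lborel) = ennreal (sqrt (2 * pi * s\<^sup>2))"
    by (simp add: ennreal_mult nn_integral_cmult)
  then show ?thesis by simp
qed

lemma power2_norm_sum_Basis:
  "(norm (\<Sum>b\<in>Basis. f b *\<^sub>R b :: 'a::euclidean_space))\<^sup>2 = (\<Sum>b\<in>Basis. (f b)\<^sup>2)"
proof -
  have "(norm (\<Sum>b\<in>Basis. f b *\<^sub>R b :: 'a))\<^sup>2 = (\<Sum>b'\<in>Basis. ((\<Sum>b\<in>Basis. f b *\<^sub>R b) \<bullet> b')\<^sup>2)"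
    unfolding power2_norm_eq_inner by (subst euclidean_inner) (simp add: power2_eq_square)
  also have "\<dots> = (\<Sum>b\<in>Basis. (f b)\<^sup>2)"
    by (simp add: inner_sum_left inner_Basis if_distrib cong: if_cong)
  finally show ?thesis .
qed

lemma nn_integral_exp_neg_norm_square_finite:
  assumes "c > 0"
  shows "(\<integral>\<^sup>+x. ennreal (exp (- c * (norm (x::'a::euclidean_space))\<^sup>2)) \<partial>lborel) < \<infinity>"
proof -
  interpret P: product_sigma_finite "\<lambda>_::'a. lborel :: real measure" by standard
  have "(\<integral>\<^sup>+x. ennreal (exp (- c * (norm (x::'a))\<^sup>2)) \<partial>lborel)
      = (\<integral>\<^sup>+f. ennreal (exp (- c * (norm (\<Sum>b\<in>Basis. f b *\<^sub>R b :: 'a))\<^sup>2)) \<partial>(\<Pi>\<^sub>M b\<in>Basis. lborel))"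
    by (subst lborel_eq) (simp add: nn_integral_distr)
  also have "\<dots> = (\<integral>\<^sup>+f. (\<Prod>b\<in>(Basis::'a set). ennreal (exp (- c * (f b)\<^sup>2)))
                       \<partial>(\<Pi>\<^sub>M b\<in>(Basis::'a set). lborel))"
    by (simp add: power2_norm_sum_Basis sum_distrib_left exp_sum prod_ennreal)
  also have "\<dots> = (\<Prod>b\<in>(Basis::'a set). (\<integral>\<^sup>+t. ennreal (exp (- c * t\<^sup>2)) \<partial>lborel))"
    by (rule P.product_nn_integral_prod) auto
  also have "\<dots> < \<infinity>"
    using nn_integral_exp_neg_square_finite[OF assms] by (simp add: power_less_top_ennreal)
  finally show ?thesis .
qed

lemma nn_integral_lborel_translate:
  fixes d :: "'a::euclidean_space"
  assumes [measurable]: "h \<in> borel_measurable borel"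
  shows "(\<integral>\<^sup>+x. h (x + d) \<partial>lborel) = (\<integral>\<^sup>+x. h x \<partial>lborel)"
proof -
  have "(\<integral>\<^sup>+x. h x \<partial>lborel) = (\<integral>\<^sup>+x. h x \<partial>(distr lborel borel ((+) d)))"
    by (simp add: lborel_distr_plus)
  also have "\<dots> = (\<integral>\<^sup>+x. h (d + x) \<partial>lborel)"
    by (simp add: nn_integral_distr)
  finally show ?thesis by (simp add: add.commute)
qed

lemma nn_integral_gauss_density_finite:
  fixes S :: "real^'n^'n"
  assumes "sym_pos_def S"
  shows "(\<integral>\<^sup>+x. ennreal (gauss_density mu S x) \<partial>lborel) < \<infinity>"
proof -
  obtain c where c: "c > 0" "\<And>y. c * (norm y)\<^sup>2 \<le> y \<bullet> (matrix_inv S *v y)"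
    using sym_pos_def_matrix_inv_coercive[OF assms] by blast
  define Z where "Z = sqrt ((2 * pi) ^ CARD('n) * det S)"
  have Z: "Z > 0" using sym_pos_def_det_pos[OF assms] by (simp add: Z_def)
  have "gauss_density mu S x \<le> (1 / Z) * exp (- (c/2) * (norm (x - mu))\<^sup>2)" for x
  proof -
    have "exp (- ((x - mu) \<bullet> (matrix_inv S *v (x - mu))) / 2) \<le> exp (- (c/2) * (norm (x - mu))\<^sup>2)"
      using c(2)[of "x - mu"] by simp
    then show ?thesis
      unfolding gauss_density_def Z_def[symmetric] using Z by (simp add: divide_right_mono)
  qed
  then have "(\<integral>\<^sup>+x. ennreal (gauss_density mu S x) \<partial>lborel)
      \<le> (\<integral>\<^sup>+x. ennreal (1 / Z) * ennreal (exp (- (c/2) * (norm (x - mu))\<^sup>2)) \<partial>lborel)"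
    using Z by (intro nn_integral_mono) (simp add: ennreal_mult[symmetric])
  also have "\<dots> = ennreal (1 / Z) * (\<integral>\<^sup>+x. ennreal (exp (- (c/2) * (norm (x - mu))\<^sup>2)) \<partial>lborel)"
    by (simp add: nn_integral_cmult)
  also have "(\<integral>\<^sup>+x. ennreal (exp (- (c/2) * (norm (x - mu))\<^sup>2)) \<partial>lborel)
      = (\<integral>\<^sup>+x. ennreal (exp (- (c/2) * (norm (x::real^'n))\<^sup>2)) \<partial>lborel)"
    using nn_integral_lborel_translate[of "\<lambda>x. ennreal (exp (- (c/2) * (norm x)\<^sup>2))" "- mu"] by simp
  also have "ennreal (1 / Z) * \<dots> < \<infinity>"
    using nn_integral_exp_neg_norm_square_finite[of "c/2", where 'a="real^'n"] c(1)
    by (simp add: ennreal_mult_less_top)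
  finally show ?thesis .
qed

lemma gauss_density_tilt:
  fixes S :: "real^'n^'n"
  assumes "sym_pos_def S"
  shows "gauss_density mu S x =
    exp (2 * t * (w \<bullet> x) - 2 * t * (w \<bullet> mu) + 2 * t\<^sup>2 * (w \<bullet> (S *v w)))
    * gauss_density (- mu) S (x - (2 *\<^sub>R mu - (2 * t) *\<^sub>R (S *v w)))"
proof -
  define P where "P = matrix_inv S"
  define y where "y = x - mu"
  define e where "e = t *\<^sub>R (S *v w)"
  have Pe: "P *v e = t *\<^sub>R w"
    using sym_pos_def_matrix_inv(2)[OF assms, of w]
    by (simp add: P_def e_def matrix_vector_mult_scaleR)
  have ePy: "e \<bullet> (P *v y) = t * (w \<bullet> y)"
    using sym_pos_def_inner_commute[OF assms, of w "P *v y"]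
      sym_pos_def_matrix_inv(1)[OF assms, of y]
    by (simp add: e_def P_def)
  have "(y + 2 *\<^sub>R e) \<bullet> (P *v (y + 2 *\<^sub>R e))
       = y \<bullet> (P *v y) + 4 * t * (w \<bullet> y) + 4 * t\<^sup>2 * (w \<bullet> (S *v w))"
    by (simp add: matrix_vector_right_distrib matrix_vector_mult_scaleR Pe ePy
        inner_commute[of y w] power2_eq_square algebra_simps)
      (simp add: e_def inner_commute)
  moreover have "x - (2 *\<^sub>R mu - (2 * t) *\<^sub>R (S *v w)) - - mu = y + 2 *\<^sub>R e"
    by (simp add: y_def e_def algebra_simps scaleR_2)
  moreover have "w \<bullet> y = w \<bullet> x - w \<bullet> mu" by (simp add: y_def inner_diff_right)
  ultimately show ?thesis
    by (simp add: gauss_density_def P_def[symmetric] y_def[symmetric] exp_add[symmetric]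
        field_simps power2_eq_square)
qed

section \<open>Lusin's theorem and injective Borel maps\<close>

lemma inner_regular_compact_approx:
  fixes N :: "'a::polish_space measure"
  assumes sN: "sets N = sets borel" and fin: "emeasure N (space N) \<noteq> \<infinity>"
    and E: "E \<in> sets borel" and d: "d > 0"
  obtains C where "compact C" "C \<subseteq> E" "emeasure N (E - C) < ennreal d"
proof -
  have EN: "E \<in> sets N" using E sN by simp
  have "emeasure N E \<le> emeasure N (space N)"
    by (rule emeasure_mono[OF sets.sets_into_space[OF EN] sets.top])
  then have finE: "emeasure N E \<noteq> \<infinity>" using fin by (auto simp: top_unique)
  have ne: "{K. K \<subseteq> E \<and> compact K} \<noteq> {}" by auto
  obtain C where C: "C \<in> {K. K \<subseteq> E \<and> compact K}" "emeasure N E < emeasure N C + ennreal d"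
    using SUP_approx_ennreal[OF d ne inner_regular[OF sN fin E] finE] by blast
  have CN: "C \<in> sets N" using C(1) sN by (simp add: borel_compact)
  have "emeasure N (E - C) + emeasure N C = emeasure N E"
    using plus_emeasure[of "E - C" N C] EN CN C(1) by (auto simp: Un_absorb2)
  moreover have "emeasure N C \<noteq> \<infinity>"
    using emeasure_mono[of C E N] C(1) EN finE by (auto simp: top_unique)
  ultimately have "emeasure N C + emeasure N (E - C) < emeasure N C + ennreal d"
    using C(2) by (simp add: add.commute)
  then have "emeasure N (E - C) < ennreal d"
    using ennreal_add_left_cancel_less by blast
  then show ?thesis using C(1) that by blast
qed

lemma closed_approx_set_and_complement:
  fixes N :: "'a::polish_space measure"
  assumes sN: "sets N = sets borel" and fin: "emeasure N (space N) \<noteq> \<infinity>"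
    and E: "E \<in> sets borel" and d: "d > 0"
  obtains A A' where "closed A" "closed A'" "A \<subseteq> E" "A' \<inter> E = {}"
    "emeasure N (- (A \<union> A')) \<le> ennreal d"
proof -
  have d2: "d / 2 > 0" using d by simp
  obtain A where A: "compact A" "A \<subseteq> E" "emeasure N (E - A) < ennreal (d / 2)"
    using inner_regular_compact_approx[OF sN fin E d2] by blast
  have E': "- E \<in> sets borel" using sets.compl_sets[OF E] by (simp add: Compl_eq_Diff_UNIV)
  obtain A' where A': "compact A'" "A' \<subseteq> - E" "emeasure N (- E - A') < ennreal (d / 2)"
    using inner_regular_compact_approx[OF sN fin E' d2] by blast
  have "- (A \<union> A') = (E - A) \<union> (- E - A')" using A(2) A'(2) by blast
  moreover have "E - A \<in> sets N" "- E - A' \<in> sets N"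
    unfolding sN using E E' A(1) A'(1) by (auto intro: borel_compact)
  ultimately have "emeasure N (- (A \<union> A')) \<le> emeasure N (E - A) + emeasure N (- E - A')"
    by (simp add: emeasure_subadditive)
  also have "\<dots> \<le> ennreal (d / 2) + ennreal (d / 2)"
    using A(3) A'(3) by (intro add_mono less_imp_le)
  also have "\<dots> = ennreal d" using d2 by (simp flip: ennreal_plus)
  finally have "emeasure N (- (A \<union> A')) \<le> ennreal d" .
  moreover have "closed A" "closed A'" "A' \<inter> E = {}"
    using A(1) A'(1,2) by (auto intro: compact_imp_closed)
  ultimately show ?thesis using A(2) that by blast
qed

lemma continuous_on_if_closed_rational_cuts:
  fixes g :: "'a::topological_space \<Rightarrow> real"
  assumes cut: "\<And>q. q \<in> \<rat> \<Longrightarrow> \<exists>A A'. closed A \<and> closed A' \<and> K \<subseteq> A \<union> A'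
                   \<and> (\<forall>x\<in>A. g x < q) \<and> (\<forall>x\<in>A'. q \<le> g x)"
  shows "continuous_on K g"
  unfolding continuous_on_def
proof (intro ballI order_tendstoI)
  have near: "\<forall>\<^sub>F x' in at x within K. x' \<in> K \<and> x' \<notin> F" if "closed F" "x \<notin> F" for F x
  proof -
    have "\<forall>\<^sub>F x' in nhds x. x' \<in> - F"
      using that by (intro eventually_nhds_in_open) auto
    then show ?thesis
      unfolding eventually_at_filter by (rule eventually_mono) simp
  qed
  fix x assume "x \<in> K"
  show "\<forall>\<^sub>F x' in at x within K. a < g x'" if lt: "a < g x" for a
  proof -
    obtain q where q: "q \<in> \<rat>" "a < q" "q < g x" using Rats_dense_in_real[OF lt] by blast
    then obtain A A' where A: "closed A" "K \<subseteq> A \<union> A'" "\<forall>x\<in>A. g x < q" "\<forall>x\<in>A'. q \<le> g x"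
      using cut[OF q(1)] by blast
    have "x \<notin> A" using A(3) q(3) by fastforce
    from near[OF A(1) this] show ?thesis
    proof (rule eventually_mono)
      fix x' assume "x' \<in> K \<and> x' \<notin> A"
      then have "x' \<in> A'" using A(2) by blast
      then show "a < g x'" using A(4) q(2) by fastforce
    qed
  qed
  show "\<forall>\<^sub>F x' in at x within K. g x' < a" if lt: "g x < a" for a
  proof -
    obtain q where q: "q \<in> \<rat>" "g x < q" "q < a" using Rats_dense_in_real[OF lt] by blast
    then obtain A A' where A: "closed A'" "K \<subseteq> A \<union> A'" "\<forall>x\<in>A. g x < q" "\<forall>x\<in>A'. q \<le> g x"
      using cut[OF q(1)] by blast
    have "x \<notin> A'" using A(4) q(2) by fastforce
    from near[OF A(1) this] show ?thesis
    proof (rule eventually_mono)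
      fix x' assume "x' \<in> K \<and> x' \<notin> A'"
      then have "x' \<in> A" using A(2) by blast
      then show "g x' < a" using A(3) q(3) by fastforce
    qed
  qed
qed

theorem Lusin:
  fixes N :: "'a::polish_space measure" and g :: "'a \<Rightarrow> real"
  assumes sN: "sets N = sets borel" and fin: "emeasure N (space N) \<noteq> \<infinity>"
    and g[measurable]: "g \<in> borel_measurable borel" and e: "e > 0"
  obtains K where "closed K" "continuous_on K g" "emeasure N (- K) \<le> ennreal e"
proof -
  define r where "r = from_nat_into (\<rat> :: real set)"
  have r: "range r = \<rat>"
    unfolding r_def by (rule range_from_nat_into) (auto simp: countable_rat)
  define a where "a n = e * (1/2) ^ Suc n" for n
  have a: "a n > 0" for n using e by (simp add: a_def)
  have "\<exists>A A'. closed A \<and> closed A' \<and> A \<subseteq> g -` {..<r n} \<and> A' \<inter> g -` {..<r n} = {}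
          \<and> emeasure N (- (A \<union> A')) \<le> ennreal (a n)" for n
  proof -
    have "g -` {..<r n} \<in> sets borel" using measurable_sets[OF g, of "{..<r n}"] by simp
    then show ?thesis by (rule closed_approx_set_and_complement[OF sN fin _ a]) blast
  qed
  then obtain A A' where AA': "\<And>n. closed (A n) \<and> closed (A' n) \<and> A n \<subseteq> g -` {..<r n}
      \<and> A' n \<inter> g -` {..<r n} = {} \<and> emeasure N (- (A n \<union> A' n)) \<le> ennreal (a n)"
    by (metis (no_types))
  define K where "K = (\<Inter>n. A n \<union> A' n)"
  have "closed K" unfolding K_def using AA' by (intro closed_INT closed_Un) auto
  moreover have "continuous_on K g"
  proof (rule continuous_on_if_closed_rational_cuts)
    fix q :: real assume "q \<in> \<rat>"
    then obtain n where n: "r n = q" using r by (metis imageE)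
    have "K \<subseteq> A n \<union> A' n" unfolding K_def by (rule INT_lower) (rule UNIV_I)
    moreover have "\<forall>x\<in>A n. g x < q" "\<forall>x\<in>A' n. q \<le> g x"
      using AA'[of n] n by (auto simp: not_less)
    ultimately show "\<exists>B B'. closed B \<and> closed B' \<and> K \<subseteq> B \<union> B' \<and> (\<forall>x\<in>B. g x < q) \<and> (\<forall>x\<in>B'. q \<le> g x)"
      using AA'[of n] by blast
  qed
  moreover have "emeasure N (- K) \<le> ennreal e"
  proof -
    have sets: "- (A n \<union> A' n) \<in> sets N" for n
      using AA'[of n] sN by (auto intro!: borel_open)
    have "emeasure N (- K) \<le> (\<Sum>n. emeasure N (- (A n \<union> A' n)))"
      unfolding K_def Compl_INT using sets by (intro emeasure_subadditive_countably) auto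
    also have "\<dots> \<le> (\<Sum>n. ennreal (a n))"
      using AA' by (intro suminf_le) auto
    also have "\<dots> = ennreal e"
      using a power_half_series sums_mult[OF power_half_series, of e]
      by (intro suminf_ennreal_eq) (auto simp: a_def less_imp_le)
    finally show ?thesis .
  qed
  ultimately show ?thesis by (rule that)
qed

lemma inj_preimage_exhausts_ae:
  fixes N :: "'a::polish_space measure" and g :: "'a \<Rightarrow> real"
  assumes sN: "sets N = sets borel" and fin: "emeasure N (space N) \<noteq> \<infinity>"
    and g[measurable]: "g \<in> borel_measurable borel" and inj: "inj g"
    and E: "E \<in> sets borel"
  obtains S where "S \<in> sets borel" "g -` S \<subseteq> E" "emeasure N (E - g -` S) = 0"
proof -
  define \<delta> where "\<delta> n = inverse (real (Suc n))" for n
  have \<delta>: "\<delta> n > 0" for n by (simp add: \<delta>_def)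
  have "\<exists>K. closed K \<and> continuous_on K g \<and> emeasure N (- K) \<le> ennreal (\<delta> n)" for n
    by (rule Lusin[OF sN fin g \<delta>]) blast
  then obtain K where
    K: "\<And>n. closed (K n) \<and> continuous_on (K n) g \<and> emeasure N (- K n) \<le> ennreal (\<delta> n)"
    by (metis (no_types))
  have EK: "E \<inter> K n \<in> sets borel" for n
    using K[of n] E by auto
  have "\<exists>C. compact C \<and> C \<subseteq> E \<inter> K n \<and> emeasure N (E \<inter> K n - C) < ennreal (\<delta> n)" for n
    by (rule inner_regular_compact_approx[OF sN fin EK \<delta>]) blast
  then obtain C where C: "\<And>n. compact (C n) \<and> C n \<subseteq> E \<inter> K n
                              \<and> emeasure N (E \<inter> K n - C n) < ennreal (\<delta> n)"
    by (metis (no_types))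
  define S where "S = (\<Union>n. g ` C n)"
  \<comment> \<open>g is continuous on K n \<supseteq> C n, so g ` C n is compact; injectivity gives g -` g ` C n = C n.\<close>
  have "compact (g ` C n)" for n
    using C[of n] K[of n] by (metis compact_continuous_image continuous_on_subset le_inf_iff)
  then have "S \<in> sets borel"
    unfolding S_def by (intro sets.countable_UN image_subsetI borel_closed compact_imp_closed)
  moreover have pre: "g -` S = (\<Union>n. C n)"
    unfolding S_def by (simp add: vimage_Union inj_vimage_image_eq[OF inj])
  moreover have "g -` S \<subseteq> E" unfolding pre using C by blast
  moreover have "emeasure N (E - g -` S) \<le> 0"
  proof (rule LIMSEQ_le_const)
    show "(\<lambda>n. ennreal (\<delta> n + \<delta> n)) \<longlonglongrightarrow> 0"
      using tendsto_add[OF LIMSEQ_inverse_real_of_nat LIMSEQ_inverse_real_of_nat]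
      by (auto simp: \<delta>_def intro: tendsto_ennrealI[where x=0, simplified])
    have "emeasure N (E - g -` S) \<le> ennreal (\<delta> n + \<delta> n)" for n
    proof -
      have sets: "E \<inter> K n - C n \<in> sets N" "- K n \<in> sets N"
        unfolding sN using EK C[of n] K[of n] by (auto intro: borel_compact)
      have "E - g -` S \<subseteq> (E \<inter> K n - C n) \<union> - K n" unfolding pre by blast
      then have "emeasure N (E - g -` S) \<le> emeasure N ((E \<inter> K n - C n) \<union> - K n)"
        using sets by (intro emeasure_mono) auto
      also have "\<dots> \<le> emeasure N (E \<inter> K n - C n) + emeasure N (- K n)"
        using sets by (rule emeasure_subadditive)
      also have "\<dots> \<le> ennreal (\<delta> n) + ennreal (\<delta> n)"
        using C[of n] K[of n] by (auto intro: add_mono less_imp_le)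
      also have "\<dots> = ennreal (\<delta> n + \<delta> n)"
        using \<delta>[of n] by (intro ennreal_plus[symmetric] less_imp_le)
      finally show ?thesis .
    qed
    then show "\<exists>n0. \<forall>n\<ge>n0. emeasure N (E - g -` S) \<le> ennreal (\<delta> n + \<delta> n)" by blast
  qed
  ultimately show ?thesis using that by auto
qed

lemma AE_le_if_nn_integral_preimage_eq:
  fixes N :: "'a::polish_space measure" and g :: "'a \<Rightarrow> real" and k1 k2 :: "'a \<Rightarrow> ennreal"
  assumes sN: "sets N = sets borel" and fin: "emeasure N (space N) \<noteq> \<infinity>"
    and g[measurable]: "g \<in> borel_measurable borel" and inj: "inj g"
    and k1: "k1 \<in> borel_measurable borel" and k2: "k2 \<in> borel_measurable borel"
    and fin2: "(\<integral>\<^sup>+u. k2 u \<partial>N) \<noteq> \<infinity>"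
    and eq: "\<And>B. B \<in> sets borel \<Longrightarrow>
      (\<integral>\<^sup>+u. k1 u * indicator (g -` B) u \<partial>N) = (\<integral>\<^sup>+u. k2 u * indicator (g -` B) u \<partial>N)"
  shows "AE u in N. k1 u \<le> k2 u"
proof -
  have [measurable]: "k1 \<in> borel_measurable N" "k2 \<in> borel_measurable N"
    using k1 k2 by (simp_all add: measurable_cong_sets[OF sN refl])
  define E where "E = {u. k2 u < k1 u}"
  have "E \<in> sets borel" unfolding E_def using k1 k2 by measurable
  then obtain S where S: "S \<in> sets borel" "g -` S \<subseteq> E" "emeasure N (E - g -` S) = 0"
    using inj_preimage_exhausts_ae[OF sN fin g inj] by blast
  define T where "T = g -` S"
  have T: "T \<in> sets borel" unfolding T_def using measurable_sets[OF g S(1)] by simp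
  then have [measurable]: "T \<in> sets N" using sN by simp
  have "AE u in N. k1 u * indicator T u \<le> k2 u * indicator T u"
  proof (rule ccontr)
    assume "\<not> (AE u in N. k1 u * indicator T u \<le> k2 u * indicator T u)"
    moreover have "AE u in N. k2 u * indicator T u \<le> k1 u * indicator T u"
      using S(2) by (intro AE_I2) (auto simp: T_def E_def indicator_def less_imp_le)
    moreover have "(\<integral>\<^sup>+u. k2 u * indicator T u \<partial>N) \<le> (\<integral>\<^sup>+u. k2 u \<partial>N)"
      by (intro nn_integral_mono) (simp add: indicator_def)
    then have "(\<integral>\<^sup>+u. k2 u * indicator T u \<partial>N) \<noteq> \<infinity>"
      using fin2 by (auto simp: top_unique)
    ultimately have "(\<integral>\<^sup>+u. k2 u * indicator T u \<partial>N) < (\<integral>\<^sup>+u. k1 u * indicator T u \<partial>N)"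
      by (intro nn_integral_less) auto
    then show False using eq[OF S(1)] by (simp add: T_def)
  qed
  moreover have "E - T \<in> null_sets N"
    using S(3) T \<open>E \<in> sets borel\<close> sN by (auto simp: T_def null_sets_def)
  then have "AE u in N. u \<notin> E - T" by (rule AE_not_in)
  ultimately show ?thesis
    by eventually_elim (auto simp: E_def indicator_def not_less split: if_splits)
qed

lemma AE_eq_if_nn_integral_preimage_eq:
  fixes N :: "'a::polish_space measure" and g :: "'a \<Rightarrow> real" and k1 k2 :: "'a \<Rightarrow> ennreal"
  assumes "sets N = sets borel" "emeasure N (space N) \<noteq> \<infinity>"
    and "g \<in> borel_measurable borel" "inj g"
    and "k1 \<in> borel_measurable borel" "k2 \<in> borel_measurable borel"
    and "(\<integral>\<^sup>+u. k1 u \<partial>N) \<noteq> \<infinity>" "(\<integral>\<^sup>+u. k2 u \<partial>N) \<noteq> \<infinity>"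
    and "\<And>B. B \<in> sets borel \<Longrightarrow>
      (\<integral>\<^sup>+u. k1 u * indicator (g -` B) u \<partial>N) = (\<integral>\<^sup>+u. k2 u * indicator (g -` B) u \<partial>N)"
  shows "AE u in N. k1 u = k2 u"
  using AE_le_if_nn_integral_preimage_eq[of N g k1 k2]
    AE_le_if_nn_integral_preimage_eq[of N g k2 k1] assms
  by (auto intro: antisym)

section \<open>The environments\<close>

definition class_density ::
  "real \<Rightarrow> real^'a \<Rightarrow> real^'a^'a \<Rightarrow> real^'b \<Rightarrow> real^'b^'b \<Rightarrow> (real^'a) \<times> (real^'b) \<Rightarrow> real"
where
  "class_density y mns Sns msp Ssp x =
     gauss_density (y *\<^sub>R mns) Sns (fst x) * gauss_density (y *\<^sub>R msp) Ssp (snd x)"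

lemma borel_measurable_class_density[measurable]:
  "class_density y mns Sns msp Ssp \<in> borel_measurable borel"
  unfolding class_density_def borel_prod[symmetric] by measurable

lemma class_density_pos:
  assumes "sym_pos_def Sns" "sym_pos_def Ssp"
  shows "class_density y mns Sns msp Ssp x > 0"
  unfolding class_density_def using gauss_density_pos[OF assms(1)] gauss_density_pos[OF assms(2)]
  by simp

lemma nn_integral_class_density_finite:
  assumes "sym_pos_def Sns" "sym_pos_def Ssp"
  shows "(\<integral>\<^sup>+x. ennreal (class_density y mns Sns msp Ssp x) \<partial>lborel) < \<infinity>"
proof -
  let ?g1 = "gauss_density (y *\<^sub>R mns) Sns" and ?g2 = "gauss_density (y *\<^sub>R msp) Ssp"
  have "(\<integral>\<^sup>+x. ennreal (class_density y mns Sns msp Ssp x) \<partial>lborel)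
     = (\<integral>\<^sup>+x. ennreal (?g1 (fst x)) * ennreal (?g2 (snd x)) \<partial>(lborel \<Otimes>\<^sub>M lborel))"
    unfolding lborel_prod class_density_def
    using gauss_density_pos[OF assms(1)] gauss_density_pos[OF assms(2)]
    by (simp add: ennreal_mult less_imp_le)
  also have "\<dots> = (\<integral>\<^sup>+x. ennreal (?g1 x) \<partial>lborel) * (\<integral>\<^sup>+x. ennreal (?g2 x) \<partial>lborel)"
    by (simp add: lborel.nn_integral_fst[symmetric] nn_integral_cmult nn_integral_multc)
  also have "\<dots> < \<infinity>"
    using nn_integral_gauss_density_finite[OF assms(1)]
      nn_integral_gauss_density_finite[OF assms(2)]
    by (simp add: ennreal_mult_less_top)
  finally show ?thesis .
qed

lemma class_density_tilt:
  fixes mns :: "real^'a" and msp :: "real^'b" and wns :: "real^'a" and wsp :: "real^'b"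
  assumes S: "sym_pos_def Sns" "sym_pos_def Ssp"
    and t: "t * (wns \<bullet> (Sns *v wns) + wsp \<bullet> (Ssp *v wsp)) = wns \<bullet> mns + wsp \<bullet> msp"
  defines "d \<equiv> (2 *\<^sub>R mns - (2 * t) *\<^sub>R (Sns *v wns), 2 *\<^sub>R msp - (2 * t) *\<^sub>R (Ssp *v wsp))"
  shows "class_density 1 mns Sns msp Ssp x
           = exp (2 * t * ((wns, wsp) \<bullet> x)) * class_density (-1) mns Sns msp Ssp (x - d)"
    and "(wns, wsp) \<bullet> d = 0"
proof -
  obtain xns xsp where x: "x = (xns, xsp)" by (cases x)
  have "2 * t\<^sup>2 * (wns \<bullet> (Sns *v wns)) + 2 * t\<^sup>2 * (wsp \<bullet> (Ssp *v wsp))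
      = 2 * t * (wns \<bullet> mns + wsp \<bullet> msp)"
    by (simp flip: t add: power2_eq_square algebra_simps)
  then have "(2 * t * (wns \<bullet> xns) - 2 * t * (wns \<bullet> mns) + 2 * t\<^sup>2 * (wns \<bullet> (Sns *v wns)))
      + (2 * t * (wsp \<bullet> xsp) - 2 * t * (wsp \<bullet> msp) + 2 * t\<^sup>2 * (wsp \<bullet> (Ssp *v wsp)))
      = 2 * t * ((wns, wsp) \<bullet> x)"
    by (simp add: x algebra_simps)
  then show "class_density 1 mns Sns msp Ssp x
      = exp (2 * t * ((wns, wsp) \<bullet> x)) * class_density (-1) mns Sns msp Ssp (x - d)"
    unfolding class_density_def x d_def
    by (simp add: gauss_density_tilt[OF S(1), of mns xns t wns]
        gauss_density_tilt[OF S(2), of msp xsp t wsp] exp_add[symmetric])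
  show "(wns, wsp) \<bullet> d = 0"
    unfolding d_def using t by (simp add: inner_diff_right algebra_simps)
qed

lemma nn_integral_class_density_tilt:
  fixes mns :: "real^'a" and msp :: "real^'b" and wns :: "real^'a" and wsp :: "real^'b"
  assumes S: "sym_pos_def Sns" "sym_pos_def Ssp"
    and t: "t * (wns \<bullet> (Sns *v wns) + wsp \<bullet> (Ssp *v wsp)) = wns \<bullet> mns + wsp \<bullet> msp"
    and [measurable]: "H \<in> borel_measurable borel"
  shows "(\<integral>\<^sup>+x. H ((wns, wsp) \<bullet> x) * ennreal (class_density 1 mns Sns msp Ssp x) \<partial>lborel)
       = (\<integral>\<^sup>+x. H ((wns, wsp) \<bullet> x)
            * ennreal (exp (2 * t * ((wns, wsp) \<bullet> x)) * class_density (-1) mns Sns msp Ssp x)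
          \<partial>lborel)"
    (is "_ = (\<integral>\<^sup>+x. ?h x \<partial>lborel)")
proof -
  define d where "d = (2 *\<^sub>R mns - (2 * t) *\<^sub>R (Sns *v wns), 2 *\<^sub>R msp - (2 * t) *\<^sub>R (Ssp *v wsp))"
  note tilt = class_density_tilt[OF S t, folded d_def]
  have "(\<integral>\<^sup>+x. H ((wns, wsp) \<bullet> x) * ennreal (class_density 1 mns Sns msp Ssp x) \<partial>lborel)
      = (\<integral>\<^sup>+x. ?h (x - d) \<partial>lborel)"
    by (simp add: tilt inner_diff_right)
  also have "\<dots> = (\<integral>\<^sup>+x. ?h x \<partial>lborel)"
    using nn_integral_lborel_translate[of ?h "- d"] by simp
  finally show ?thesis .
qed

lemma measurable_count_space_pair:
  assumes "countable A" "\<And>y. y \<in> A \<Longrightarrow> h y \<in> borel_measurable N"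
  shows "(\<lambda>\<omega>. h (fst \<omega>) (snd \<omega>)) \<in> borel_measurable (count_space A \<Otimes>\<^sub>M N)"
proof (rule measurable_compose_countable'[where I=A and g=fst and f="\<lambda>y \<omega>. h y (snd \<omega>)"])
  fix y assume "y \<in> A"
  then show "(\<lambda>\<omega>. h y (snd \<omega>)) \<in> borel_measurable (count_space A \<Otimes>\<^sub>M N)"
    using assms(2) by measurable
qed (use assms in auto)

lemma sets_env_measure:
  "sets (env_measure eta mns Sns msp Ssp) = sets (count_space {-1, 1} \<Otimes>\<^sub>M (lborel \<Otimes>\<^sub>M lborel))"
  unfolding env_measure_def by simp

lemma nn_integral_env_measure:
  fixes mns :: "real^'a" and msp :: "real^'b"
  assumes "0 \<le> eta" "eta \<le> 1" "sym_pos_def Sns" "sym_pos_def Ssp"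
    and G: "G \<in> borel_measurable (count_space {-1, 1} \<Otimes>\<^sub>M (lborel \<Otimes>\<^sub>M lborel))"
  shows "(\<integral>\<^sup>+\<omega>. G \<omega> \<partial>env_measure eta mns Sns msp Ssp)
    = ennreal eta * (\<integral>\<^sup>+x. G (1, x) * ennreal (class_density 1 mns Sns msp Ssp x) \<partial>lborel)
    + ennreal (1 - eta) * (\<integral>\<^sup>+x. G (-1, x) * ennreal (class_density (-1) mns Sns msp Ssp x) \<partial>lborel)"
proof -
  define D where "D \<omega> = ennreal ((if fst \<omega> = 1 then eta else 1 - eta)
      * class_density (fst \<omega>) mns Sns msp Ssp (snd \<omega>))"
    for \<omega> :: "real \<times> (real^'a) \<times> (real^'b)"
  have G': "G \<in> borel_measurable (count_space {-1, 1} \<Otimes>\<^sub>M lborel)"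
    using G unfolding lborel_prod .
  have D: "D \<in> borel_measurable (count_space {-1, 1} \<Otimes>\<^sub>M lborel)"
    unfolding D_def by (rule measurable_count_space_pair
        [where h="\<lambda>y x. ennreal ((if y = 1 then eta else 1 - eta)
                                    * class_density y mns Sns msp Ssp x)"])
      auto
  have [measurable]: "(\<lambda>x. G (1, x)) \<in> borel_measurable lborel"
    "(\<lambda>x. G (-1, x)) \<in> borel_measurable lborel"
    using measurable_Pair2[OF G'] by auto
  have "env_measure eta mns Sns msp Ssp = density (count_space {-1, 1} \<Otimes>\<^sub>M lborel) D"
    unfolding env_measure_def D_def lborel_prod
    by (auto intro!: arg_cong2[where f=density] simp: class_density_def mult.assoc)
  then have "(\<integral>\<^sup>+\<omega>. G \<omega> \<partial>env_measure eta mns Sns msp Ssp)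
      = (\<integral>\<^sup>+y. \<integral>\<^sup>+x. D (y, x) * G (y, x) \<partial>lborel \<partial>count_space {-1, 1})"
    using D G' by (simp add: nn_integral_density lborel.nn_integral_fst[symmetric])
  also have "\<dots> = (\<integral>\<^sup>+x. D (-1, x) * G (-1, x) \<partial>lborel) + (\<integral>\<^sup>+x. D (1, x) * G (1, x) \<partial>lborel)"
    by (simp add: nn_integral_count_space_finite)
  also have "\<dots> = ennreal (1 - eta)
                     * (\<integral>\<^sup>+x. G (-1, x) * ennreal (class_density (-1) mns Sns msp Ssp x) \<partial>lborel)
      + ennreal eta * (\<integral>\<^sup>+x. G (1, x) * ennreal (class_density 1 mns Sns msp Ssp x) \<partial>lborel)"
    unfolding D_def using assms(1,2) class_density_pos[OF assms(3,4)]
    by (simp add: nn_integral_cmult[symmetric] ennreal_mult less_imp_le ac_simps)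
  finally show ?thesis by (simp add: add.commute)
qed

lemma finite_measure_env_measure:
  fixes mns :: "real^'a" and msp :: "real^'b"
  assumes "0 \<le> eta" "eta \<le> 1" "sym_pos_def Sns" "sym_pos_def Ssp"
  shows "finite_measure (env_measure eta mns Sns msp Ssp)"
proof
  let ?M = "env_measure eta mns Sns msp Ssp"
  have "emeasure ?M (space ?M)
    = ennreal eta * (\<integral>\<^sup>+x. ennreal (class_density 1 mns Sns msp Ssp x) \<partial>lborel)
    + ennreal (1 - eta) * (\<integral>\<^sup>+x. ennreal (class_density (-1) mns Sns msp Ssp x) \<partial>lborel)"
    using nn_integral_env_measure[OF assms, of "\<lambda>_. 1"] by simp
  also have "\<dots> < \<infinity>"
    using nn_integral_class_density_finite[OF assms(3,4)] by (simp add: ennreal_mult_less_top)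
  finally show "emeasure ?M (space ?M) \<noteq> \<infinity>" by simp
qed

lemma calibrated_nn_integral_indicator:
  fixes Y f :: "'x \<Rightarrow> real"
  assumes "finite_measure M" and cal: "calibrated M Y f"
    and f[measurable]: "f \<in> borel_measurable M"
    and Y: "integrable M Y" and "integrable M f"
    and nonneg: "\<And>\<omega>. 0 \<le> Y \<omega>" "\<And>\<omega>. 0 \<le> f \<omega>"
    and B[measurable]: "B \<in> sets borel"
  shows "(\<integral>\<^sup>+\<omega>. ennreal (indicator B (f \<omega>) * Y \<omega>) \<partial>M)
       = (\<integral>\<^sup>+\<omega>. ennreal (indicator B (f \<omega>) * f \<omega>) \<partial>M)"
proof -
  define F where "F = vimage_algebra (space M) f borel"
  have subalg: "subalgebra M F"
    unfolding subalgebra_def F_def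
    using measurable_sets[OF f] by (auto simp: sets_vimage_algebra2)
  interpret finite_measure_subalgebra M F
    using assms(1) subalg
    by (intro finite_measure_subalgebra.intro finite_measure_subalgebra_axioms.intro)
  define A where "A = f -` B \<inter> space M"
  have AF: "A \<in> sets F" unfolding A_def F_def by (rule in_vimage_algebra) (rule B)
  have [measurable]: "A \<in> sets M" unfolding A_def using measurable_sets[OF f B] .
  have [measurable]: "real_cond_exp M F Y \<in> borel_measurable M"
    using borel_measurable_cond_exp measurable_from_subalg[OF subalg] by blast
  have "(\<integral>\<omega>. indicator A \<omega> * Y \<omega> \<partial>M) = (\<integral>\<omega>. indicator A \<omega> * real_cond_exp M F Y \<omega> \<partial>M)"
    using real_cond_exp_intA[OF Y AF] unfolding set_lebesgue_integral_def by simp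
  also have "\<dots> = (\<integral>\<omega>. indicator A \<omega> * f \<omega> \<partial>M)"
    using cal unfolding calibrated_def F_def[symmetric]
    by (intro integral_cong_AE) (auto elim: AE_mp)
  finally have "(\<integral>\<omega>. indicator A \<omega> * Y \<omega> \<partial>M) = (\<integral>\<omega>. indicator A \<omega> * f \<omega> \<partial>M)" .
  moreover have "(\<integral>\<^sup>+\<omega>. ennreal (indicator A \<omega> * h \<omega>) \<partial>M) = ennreal (\<integral>\<omega>. indicator A \<omega> * h \<omega> \<partial>M)"
    if "integrable M h" "\<And>\<omega>. 0 \<le> h \<omega>" for h
    using integrable_mult_indicator[of A M h] that by (intro nn_integral_eq_integral) auto
  moreover have "indicator A \<omega> = indicator B (f \<omega>)" if "\<omega> \<in> space M" for \<omega>
    using that by (simp add: A_def indicator_def)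
  ultimately show ?thesis
    using Y assms(5) nonneg
    by (metis (no_types, lifting) nn_integral_cong)
qed

lemma borel_measurable_env_measure_pair:
  fixes h :: "real \<Rightarrow> (real^'a) \<times> (real^'b) \<Rightarrow> 'c::topological_space"
  assumes "\<And>y. h y \<in> borel_measurable borel"
  shows "(\<lambda>\<omega>. h (fst \<omega>) (snd \<omega>)) \<in> borel_measurable (count_space {-1, 1} \<Otimes>\<^sub>M (lborel \<Otimes>\<^sub>M lborel))"
    and "(\<lambda>\<omega>. h (fst \<omega>) (snd \<omega>)) \<in> borel_measurable (env_measure eta mns Sns msp Ssp)"
proof -
  show *: "(\<lambda>\<omega>. h (fst \<omega>) (snd \<omega>)) \<in> borel_measurable (count_space {-1, 1} \<Otimes>\<^sub>M (lborel \<Otimes>\<^sub>M lborel))"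
    unfolding lborel_prod by (rule measurable_count_space_pair) (auto simp: assms)
  then show "(\<lambda>\<omega>. h (fst \<omega>) (snd \<omega>)) \<in> borel_measurable (env_measure eta mns Sns msp Ssp)"
    unfolding measurable_cong_sets[OF sets_env_measure refl] .
qed

lemma calibrated_env_measure_nn_integral:
  fixes mns :: "real^'a" and msp :: "real^'b" and s :: "(real^'a) \<times> (real^'b) \<Rightarrow> real"
  assumes eta: "0 \<le> eta" "eta \<le> 1" and S: "sym_pos_def Sns" "sym_pos_def Ssp"
    and s[measurable]: "s \<in> borel_measurable borel" and s01: "\<And>x. 0 \<le> s x \<and> s x \<le> 1"
    and cal: "calibrated (env_measure eta mns Sns msp Ssp)
                (\<lambda>(y, _). if y = 1 then 1 else 0) (\<lambda>\<omega>. s (snd \<omega>))"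
    and B[measurable]: "B \<in> sets borel"
  shows "(\<integral>\<^sup>+\<omega>. ennreal (indicator B (s (snd \<omega>)) * (if fst \<omega> = 1 then 1 else 0))
            \<partial>env_measure eta mns Sns msp Ssp)
       = (\<integral>\<^sup>+\<omega>. ennreal (indicator B (s (snd \<omega>)) * s (snd \<omega>)) \<partial>env_measure eta mns Sns msp Ssp)"
proof -
  let ?M = "env_measure eta mns Sns msp Ssp"
  have Y: "(\<lambda>(y, _). if y = 1 then 1 else 0) = (\<lambda>\<omega>. if fst \<omega> = (1::real) then 1 else (0::real))"
    by auto
  have [measurable]: "(\<lambda>\<omega>. if fst \<omega> = (1::real) then 1 else (0::real)) \<in> borel_measurable ?M"
    "(\<lambda>\<omega>. s (snd \<omega>)) \<in> borel_measurable ?M"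
    by (rule borel_measurable_env_measure_pair(2); simp)+
  interpret finite_measure ?M using finite_measure_env_measure[OF eta S] .
  show ?thesis
    using cal s01 unfolding Y
    by (intro calibrated_nn_integral_indicator[OF finite_measure_axioms])
      (auto intro!: integrable_const_bound[where B=1])
qed

lemma calibrated_env_measure_balance:
  fixes mns :: "real^'a" and msp :: "real^'b" and s :: "(real^'a) \<times> (real^'b) \<Rightarrow> real"
  assumes eta: "0 \<le> eta" "eta \<le> 1" and S: "sym_pos_def Sns" "sym_pos_def Ssp"
    and s[measurable]: "s \<in> borel_measurable borel" and s01: "\<And>x. 0 \<le> s x \<and> s x \<le> 1"
    and cal: "calibrated (env_measure eta mns Sns msp Ssp)
                (\<lambda>(y, _). if y = 1 then 1 else 0) (\<lambda>\<omega>. s (snd \<omega>))"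
    and B[measurable]: "B \<in> sets borel"
  shows "ennreal eta
           * (\<integral>\<^sup>+x. ennreal (indicator B (s x) * (1 - s x) * class_density 1 mns Sns msp Ssp x) \<partial>lborel)
       = ennreal (1 - eta)
           * (\<integral>\<^sup>+x. ennreal (indicator B (s x) * s x * class_density (-1) mns Sns msp Ssp x) \<partial>lborel)"
proof -
  let ?p = "class_density 1 mns Sns msp Ssp" and ?q = "class_density (-1) mns Sns msp Ssp"
  define I where "I h = (\<integral>\<^sup>+x. ennreal (indicator B (s x) * h (s x) * ?p x) \<partial>lborel)" for h
  note env = nn_integral_env_measure[OF eta S borel_measurable_env_measure_pair(1)]
  have "ennreal (indicator B (s x) * ?p x)
      = ennreal (indicator B (s x) * s x * ?p x)
        + ennreal (indicator B (s x) * (1 - s x) * ?p x)" for x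
    using s01[of x] class_density_pos[OF S, of 1 mns msp x]
    by (subst ennreal_plus[symmetric]) (auto simp: algebra_simps mult_left_le_one_le less_imp_le)
  then have "ennreal eta * (I (\<lambda>v. v) + I (\<lambda>v. 1 - v))
      = ennreal eta * I (\<lambda>v. v)
        + ennreal (1 - eta) * (\<integral>\<^sup>+x. ennreal (indicator B (s x) * s x * ?q x) \<partial>lborel)"
    using calibrated_env_measure_nn_integral[OF eta S s s01 cal B]
      env[of "\<lambda>y x. ennreal (indicator B (s x) * (if y = 1 then 1 else 0))"]
      env[of "\<lambda>y x. ennreal (indicator B (s x) * s x)"] s01
    by (simp add: I_def ennreal_mult[symmetric] nn_integral_add less_imp_le class_density_pos[OF S])
  moreover have "ennreal eta * I (\<lambda>v. v) \<noteq> \<infinity>"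
  proof -
    have "I (\<lambda>v. v) \<le> (\<integral>\<^sup>+x. ennreal (?p x) \<partial>lborel)"
      unfolding I_def using s01 class_density_pos[OF S]
      by (intro nn_integral_mono ennreal_leI)
        (simp add: indicator_def mult_left_le_one_le less_imp_le)
    then show ?thesis
      using nn_integral_class_density_finite[OF S, of 1 mns msp]
      by (simp add: ennreal_mult_eq_top_iff top_unique)
  qed
  ultimately show ?thesis
    unfolding I_def distrib_left by (simp add: ennreal_add_left_cancel)
qed

lemma calibrated_env_measure_tilted_balance:
  fixes mns :: "real^'a" and msp :: "real^'b" and wns :: "real^'a" and wsp :: "real^'b"
    and g :: "real \<Rightarrow> real"
  assumes eta: "0 \<le> eta" "eta \<le> 1" and S: "sym_pos_def Sns" "sym_pos_def Ssp"
    and g[measurable]: "g \<in> borel_measurable borel" and g01: "\<And>u. 0 \<le> g u \<and> g u \<le> 1"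
    and cal: "calibrated (env_measure eta mns Sns msp Ssp)
                (\<lambda>(y, _). if y = 1 then 1 else 0) (\<lambda>\<omega>. g ((wns, wsp) \<bullet> snd \<omega>))"
    and t: "t * (wns \<bullet> (Sns *v wns) + wsp \<bullet> (Ssp *v wsp)) = wns \<bullet> mns + wsp \<bullet> msp"
    and B[measurable]: "B \<in> sets borel"
  defines "w \<equiv> (wns, wsp)" and "p \<equiv> class_density (-1) mns Sns msp Ssp"
  shows "ennreal eta * (\<integral>\<^sup>+x. ennreal (indicator B (g (w \<bullet> x)) * (1 - g (w \<bullet> x))
                                          * exp (2 * t * (w \<bullet> x)) * p x) \<partial>lborel)
       = ennreal (1 - eta) * (\<integral>\<^sup>+x. ennreal (indicator B (g (w \<bullet> x)) * g (w \<bullet> x) * p x) \<partial>lborel)"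
proof -
  define H where "H u = ennreal (indicator B (g u) * (1 - g u))" for u
  have [measurable]: "H \<in> borel_measurable borel" unfolding H_def by measurable
  have nonneg: "0 \<le> indicator B (g u) * (1 - g u)" for u
    using g01[of u] by simp
  have p: "0 \<le> p x" for x
    unfolding p_def using class_density_pos[OF S] less_imp_le by blast
  have "(\<integral>\<^sup>+x. ennreal (indicator B (g (w \<bullet> x)) * (1 - g (w \<bullet> x))
                             * exp (2 * t * (w \<bullet> x)) * p x) \<partial>lborel)
      = (\<integral>\<^sup>+x. H (w \<bullet> x) * ennreal (exp (2 * t * (w \<bullet> x)) * p x) \<partial>lborel)"
    unfolding H_def using nonneg p by (simp add: ennreal_mult[symmetric] mult.assoc)
  also have "\<dots> = (\<integral>\<^sup>+x. H (w \<bullet> x) * ennreal (class_density 1 mns Sns msp Ssp x) \<partial>lborel)"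
    unfolding w_def p_def by (rule nn_integral_class_density_tilt[OF S t, symmetric]) simp
  also have "\<dots> = (\<integral>\<^sup>+x. ennreal (indicator B (g (w \<bullet> x)) * (1 - g (w \<bullet> x))
                                  * class_density 1 mns Sns msp Ssp x) \<partial>lborel)"
    unfolding H_def using nonneg class_density_pos[OF S] by (simp add: ennreal_mult less_imp_le)
  finally show ?thesis
    using calibrated_env_measure_balance[OF eta S _ _ cal B] g01 unfolding w_def p_def
    by simp
qed

lemma calibrated_env_measure_pushforward_balance:
  fixes mns :: "real^'a" and msp :: "real^'b" and wns :: "real^'a" and wsp :: "real^'b"
    and g :: "real \<Rightarrow> real"
  assumes eta: "0 \<le> eta" "eta \<le> 1" and S: "sym_pos_def Sns" "sym_pos_def Ssp"
    and g[measurable]: "g \<in> borel_measurable borel" and g01: "\<And>u. 0 \<le> g u \<and> g u \<le> 1"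
    and cal: "calibrated (env_measure eta mns Sns msp Ssp)
                (\<lambda>(y, _). if y = 1 then 1 else 0) (\<lambda>\<omega>. g ((wns, wsp) \<bullet> snd \<omega>))"
    and t: "t * (wns \<bullet> (Sns *v wns) + wsp \<bullet> (Ssp *v wsp)) = wns \<bullet> mns + wsp \<bullet> msp"
    and B[measurable]: "B \<in> sets borel"
  defines "N \<equiv> distr (density lborel (\<lambda>x. ennreal (class_density (-1) mns Sns msp Ssp x))) borel
                  (\<lambda>x. (wns, wsp) \<bullet> x)"
  shows "(\<integral>\<^sup>+u. ennreal (eta * exp (2 * t * u) * (1 - g u)) * indicator (g -` B) u \<partial>N)
       = (\<integral>\<^sup>+u. ennreal ((1 - eta) * g u) * indicator (g -` B) u \<partial>N)"
proof -
  define w where "w = (wns, wsp)"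
  define p where "p = class_density (-1) mns Sns msp Ssp"
  have p: "p x > 0" for x unfolding p_def using class_density_pos[OF S] .
  have [measurable]: "p \<in> borel_measurable borel" unfolding p_def by measurable
  have [measurable]: "g -` B \<in> sets borel" using measurable_sets[OF g B] by simp
  have intN: "(\<integral>\<^sup>+u. H u * indicator (g -` B) u \<partial>N)
      = (\<integral>\<^sup>+x. ennreal (p x) * (H (w \<bullet> x) * indicator B (g (w \<bullet> x))) \<partial>lborel)"
    if [measurable]: "H \<in> borel_measurable borel" for H
    unfolding N_def p_def w_def by (simp add: nn_integral_distr nn_integral_density indicator_def)
  have "(\<integral>\<^sup>+u. ennreal (eta * exp (2 * t * u) * (1 - g u)) * indicator (g -` B) u \<partial>N)
      = (\<integral>\<^sup>+x. ennreal (p x) * (ennreal (eta * exp (2 * t * (w \<bullet> x)) * (1 - g (w \<bullet> x)))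
                                  * indicator B (g (w \<bullet> x))) \<partial>lborel)"
    by (rule intN) measurable
  also have "\<dots> = (\<integral>\<^sup>+x. ennreal eta * ennreal (indicator B (g (w \<bullet> x)) * (1 - g (w \<bullet> x))
                                          * exp (2 * t * (w \<bullet> x)) * p x) \<partial>lborel)"
  proof (rule nn_integral_cong)
    fix x
    show "ennreal (p x) * (ennreal (eta * exp (2 * t * (w \<bullet> x)) * (1 - g (w \<bullet> x)))
                            * indicator B (g (w \<bullet> x)))
        = ennreal eta * ennreal (indicator B (g (w \<bullet> x)) * (1 - g (w \<bullet> x))
                                  * exp (2 * t * (w \<bullet> x)) * p x)"
      using eta g01[of "w \<bullet> x"] p[of x]
      by (cases "g (w \<bullet> x) \<in> B") (simp_all add: ennreal_mult[symmetric] ac_simps)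
  qed
  also have "\<dots> = ennreal (1 - eta)
                     * (\<integral>\<^sup>+x. ennreal (indicator B (g (w \<bullet> x)) * g (w \<bullet> x) * p x) \<partial>lborel)"
    unfolding w_def p_def
    by (simp add: nn_integral_cmult calibrated_env_measure_tilted_balance[OF eta S g g01 cal t B])
  also have "\<dots> = (\<integral>\<^sup>+x. ennreal (1 - eta)
                         * ennreal (indicator B (g (w \<bullet> x)) * g (w \<bullet> x) * p x) \<partial>lborel)"
    by (rule nn_integral_cmult[symmetric]) measurable
  also have "\<dots> = (\<integral>\<^sup>+x. ennreal (p x) * (ennreal ((1 - eta) * g (w \<bullet> x))
                                             * indicator B (g (w \<bullet> x))) \<partial>lborel)"
  proof (rule nn_integral_cong)
    fix x
    show "ennreal (1 - eta) * ennreal (indicator B (g (w \<bullet> x)) * g (w \<bullet> x) * p x)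
        = ennreal (p x) * (ennreal ((1 - eta) * g (w \<bullet> x)) * indicator B (g (w \<bullet> x)))"
      using eta g01[of "w \<bullet> x"] p[of x]
      by (cases "g (w \<bullet> x) \<in> B") (simp_all add: ennreal_mult[symmetric] ac_simps)
  qed
  also have "\<dots> = (\<integral>\<^sup>+u. ennreal ((1 - eta) * g u) * indicator (g -` B) u \<partial>N)"
    by (rule intN[symmetric]) measurable
  finally show ?thesis .
qed

lemma calibrated_env_measure_AE_tilt:
  fixes mns :: "real^'a" and msp :: "real^'b" and wns :: "real^'a" and wsp :: "real^'b"
    and g :: "real \<Rightarrow> real"
  assumes eta: "0 \<le> eta" "eta \<le> 1" and S: "sym_pos_def Sns" "sym_pos_def Ssp"
    and g[measurable]: "g \<in> borel_measurable borel" and inj: "inj g"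
    and g01: "\<And>u. 0 \<le> g u \<and> g u \<le> 1"
    and cal: "calibrated (env_measure eta mns Sns msp Ssp)
                (\<lambda>(y, _). if y = 1 then 1 else 0) (\<lambda>\<omega>. g ((wns, wsp) \<bullet> snd \<omega>))"
    and t: "t * (wns \<bullet> (Sns *v wns) + wsp \<bullet> (Ssp *v wsp)) = wns \<bullet> mns + wsp \<bullet> msp"
  defines "w \<equiv> (wns, wsp)"
  shows "AE x in lborel. eta * exp (2 * t * (w \<bullet> x)) * (1 - g (w \<bullet> x)) = (1 - eta) * g (w \<bullet> x)"
proof -
  define p where "p = class_density (-1) mns Sns msp Ssp"
  have p: "p x > 0" for x unfolding p_def using class_density_pos[OF S] .
  define N where "N = distr (density lborel (\<lambda>x. ennreal (p x))) borel (\<lambda>x. w \<bullet> x)"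
  have sN: "sets N = sets borel" by (simp add: N_def)
  have "emeasure N (space N) = (\<integral>\<^sup>+x. ennreal (p x) \<partial>lborel)"
    unfolding N_def p_def by (simp add: emeasure_distr emeasure_density)
  then have fin: "emeasure N (space N) \<noteq> \<infinity>"
    using nn_integral_class_density_finite[OF S, of "-1" mns msp] by (simp add: p_def)
  define h1 where "h1 u = ennreal (eta * exp (2 * t * u) * (1 - g u))" for u
  define h2 where "h2 u = ennreal ((1 - eta) * g u)" for u
  have [measurable]: "h1 \<in> borel_measurable borel" "h2 \<in> borel_measurable borel"
    unfolding h1_def h2_def by measurable
  have balance: "(\<integral>\<^sup>+u. h1 u * indicator (g -` B) u \<partial>N) = (\<integral>\<^sup>+u. h2 u * indicator (g -` B) u \<partial>N)"
    if "B \<in> sets borel" for B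
    unfolding h1_def h2_def N_def p_def w_def
    by (rule calibrated_env_measure_pushforward_balance[OF eta S g g01 cal t that])
  have "(\<integral>\<^sup>+u. h2 u \<partial>N) \<le> (\<integral>\<^sup>+u. 1 \<partial>N)"
    unfolding h2_def using eta g01 by (intro nn_integral_mono) (simp add: mult_le_one)
  then have fin2: "(\<integral>\<^sup>+u. h2 u \<partial>N) \<noteq> \<infinity>"
    using fin by (auto simp: top_unique)
  moreover have "(\<integral>\<^sup>+u. h1 u \<partial>N) \<noteq> \<infinity>"
    using balance[of UNIV] fin2 by simp
  ultimately have "AE u in N. h1 u = h2 u"
    using balance by (intro AE_eq_if_nn_integral_preimage_eq[OF sN fin g inj]) auto
  then have "AE x in density lborel (\<lambda>x. ennreal (p x)). h1 (w \<bullet> x) = h2 (w \<bullet> x)"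
    unfolding N_def by (subst (asm) AE_distr_iff) auto
  then have "AE x in lborel. h1 (w \<bullet> x) = h2 (w \<bullet> x)"
    using p by (subst (asm) AE_density) (auto simp: p_def)
  then show ?thesis
    by eventually_elim (use eta g01 in \<open>simp add: h1_def h2_def\<close>)
qed

section \<open>Identifying the tilt\<close>

lemma AE_lborel_hyperplane_complement:
  fixes w :: "'a::euclidean_space"
  assumes "w \<noteq> 0"
  shows "AE x in lborel. w \<bullet> x \<noteq> c"
proof -
  have "{x. w \<bullet> x = c} \<in> null_sets lebesgue"
    using negligible_hyperplane[of w c] assms by (simp add: negligible_iff_null_sets)
  moreover have "{x. w \<bullet> x = c} \<in> sets lborel" by measurable
  ultimately have "{x. w \<bullet> x = c} \<in> null_sets lborel"
    using null_sets_completion_iff by blast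
  from AE_not_in[OF this] show ?thesis by simp
qed

lemma AE_lborel_inner_obtain:
  fixes w :: "'a::euclidean_space"
  assumes "w \<noteq> 0" "AE x in lborel. P (w \<bullet> x)"
  obtains u where "u \<noteq> c" "P u"
proof -
  have ev: "AE x in lborel. w \<bullet> x \<noteq> c \<and> P (w \<bullet> x)"
    using AE_lborel_hyperplane_complement[OF assms(1)] assms(2) by eventually_elim simp
  have "ae_filter (lborel :: 'a measure) \<noteq> bot"
    by (simp add: ae_filter_eq_bot_iff)
  with eventually_happens[OF ev] show ?thesis using that by blast
qed

lemma tilt_equation_parameter_unique:
  fixes w :: "'a::euclidean_space"
  assumes "w \<noteq> 0" and g01: "\<And>u. 0 < g u \<and> g u < 1"
    and "AE x in lborel. eta * exp (2 * s * (w \<bullet> x)) * (1 - g (w \<bullet> x)) = (1 - eta) * g (w \<bullet> x)"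
    and "AE x in lborel. eta * exp (2 * t * (w \<bullet> x)) * (1 - g (w \<bullet> x)) = (1 - eta) * g (w \<bullet> x)"
  shows "s = t"
proof -
  obtain u where u: "u \<noteq> 0"
    "eta * exp (2 * s * u) * (1 - g u) = (1 - eta) * g u"
    "eta * exp (2 * t * u) * (1 - g u) = (1 - eta) * g u"
    using AE_lborel_inner_obtain[OF assms(1) AE_conjI[OF assms(3,4)]] by blast
  have "eta \<noteq> 0" using u(2) g01[of u] by auto
  then have "eta * (1 - g u) \<noteq> 0" using g01[of u] by simp
  moreover have "exp (2 * s * u) * (eta * (1 - g u)) = exp (2 * t * u) * (eta * (1 - g u))"
    using u(2,3) by (simp add: ac_simps)
  ultimately have "exp (2 * s * u) = exp (2 * t * u)" by simp
  then show ?thesis using u(1) by simp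
qed

lemma tilt_equation_parameter_nonzero:
  fixes w :: "'a::euclidean_space"
  assumes "w \<noteq> 0" "inj g"
    and eq: "AE x in lborel. eta * exp (2 * t * (w \<bullet> x)) * (1 - g (w \<bullet> x)) = (1 - eta) * g (w \<bullet> x)"
  shows "t \<noteq> 0"
proof
  assume "t = 0"
  have const: "AE x in lborel. g (w \<bullet> x) = eta"
    using eq by eventually_elim (simp add: \<open>t = 0\<close> algebra_simps)
  obtain u1 where "g u1 = eta"
    using AE_lborel_inner_obtain[OF assms(1) const] .
  moreover obtain u2 where "u2 \<noteq> u1" "g u2 = eta"
    using AE_lborel_inner_obtain[OF assms(1) const] .
  ultimately show False using \<open>inj g\<close> by (metis injD)
qed

theorem lemmaS2:
  fixes k :: nat and eta :: real
    and mu_ns :: "real^'a" and Sig_ns :: "real^'a^'a"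
    and mu :: "nat \<Rightarrow> real^'b" and Sig :: "nat \<Rightarrow> real^'b^'b"
    and sigma :: "real \<Rightarrow> real"
    and w_ns :: "real^'a" and w_sp :: "real^'b" and b :: real
  assumes "k \<ge> 1"
    and "0 \<le> eta" and "eta \<le> 1"
    and "sym_pos_def Sig_ns"
    and "\<forall>i\<in>{1..k}. sym_pos_def (Sig i)"
    and "bij_betw sigma UNIV {0<..<1}"
    and "sigma \<in> borel_measurable borel"
    and "\<forall>i\<in>{1..k}. calibrated (env_measure eta mu_ns Sig_ns (mu i) (Sig i))
           (\<lambda>(y, _). if y = 1 then 1 else 0)
           (\<lambda>(_, (xns, xsp)). sigma (w_ns \<bullet> xns + w_sp \<bullet> xsp - b))"
  shows "(w_ns = 0 \<and> w_sp = 0) \<or>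
         (\<exists>t. t \<noteq> 0 \<and> (\<forall>i\<in>{1..k}.
            (w_ns \<bullet> mu_ns + w_sp \<bullet> mu i)
              / (w_ns \<bullet> (Sig_ns *v w_ns) + w_sp \<bullet> (Sig i *v w_sp)) = t))"
proof (cases "w_ns = 0 \<and> w_sp = 0")
  case False
  define w where "w = (w_ns, w_sp)"
  define g where "g u = sigma (u - b)" for u
  define T where "T i = (w_ns \<bullet> mu_ns + w_sp \<bullet> mu i)
                        / (w_ns \<bullet> (Sig_ns *v w_ns) + w_sp \<bullet> (Sig i *v w_sp))" for i
  have "w \<noteq> 0" using False by (simp add: w_def zero_prod_def)
  have g01: "0 < g u \<and> g u < 1" for u using assms(6) by (auto simp: g_def bij_betw_def)
  have "inj g" using assms(6) unfolding g_def bij_betw_def inj_def by force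
  have [measurable]: "g \<in> borel_measurable borel" using assms(7) unfolding g_def by measurable
  have AE: "AE x in lborel. eta * exp (2 * T i * (w \<bullet> x)) * (1 - g (w \<bullet> x)) = (1 - eta) * g (w \<bullet> x)"
    if "i \<in> {1..k}" for i
  proof -
    have score: "(\<lambda>(_, (xns, xsp)). sigma (w_ns \<bullet> xns + w_sp \<bullet> xsp - b)) = (\<lambda>\<omega>. g (w \<bullet> snd \<omega>))"
      by (auto simp: g_def w_def)
    have "calibrated (env_measure eta mu_ns Sig_ns (mu i) (Sig i))
        (\<lambda>(y, _). if y = 1 then 1 else 0) (\<lambda>\<omega>. g (w \<bullet> snd \<omega>))"
      using assms(8) that unfolding score by blast
    moreover have "w_ns \<bullet> (Sig_ns *v w_ns) + w_sp \<bullet> (Sig i *v w_sp) > 0"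
      using sym_pos_def_block_quadratic_pos assms(4,5) that False by blast
    ultimately show ?thesis
      unfolding w_def T_def using assms(2-5) that g01 \<open>inj g\<close>
      by (intro calibrated_env_measure_AE_tilt) (auto simp: less_imp_le)
  qed
  have "1 \<in> {1..k}" using assms(1) by simp
  then have "T i = T 1" if "i \<in> {1..k}" for i
    using tilt_equation_parameter_unique[OF \<open>w \<noteq> 0\<close> g01 AE AE] that by blast
  moreover have "T 1 \<noteq> 0"
    using tilt_equation_parameter_nonzero[OF \<open>w \<noteq> 0\<close> \<open>inj g\<close> AE] \<open>1 \<in> {1..k}\<close> by blast
  ultimately show ?thesis unfolding T_def by blast
qed simp

end
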